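(* Suppose $m=n$, $\Xi=\{\boldsymbol{\xi}\in\mathbb{R}^m:\boldsymbol{a}_k^{\top}\boldsymbol{\xi}\le d_k,\ k=1,\dots,l\}$ with $\boldsymbol{a}_k\in\mathbb{R}^m$, $d_k>0$, and $f_t(\boldsymbol{x},\boldsymbol{\xi})=\boldsymbol{\xi}^{\top}\boldsymbol{x}+\langle\boldsymbol{A}^t,\boldsymbol{\xi}\boldsymbol{\xi}^{\top}\rangle+(\boldsymbol{b}^t)^{\top}\boldsymbol{x}+h^t$ for all $t\in[T]$, where $\boldsymbol{A}^t\succeq0$ is symmetric, $\boldsymbol{b}^t\in\mathbb{R}^n$, $h^t\in\mathbb{R}$. Let $\tilde Z_{C_2}$ be the set of $\boldsymbol{x}\in\mathbb{R}^n$ for which there exist $\alpha_t>0$, $q_{it}\ge0$, $\boldsymbol{v}_{it}\in\mathbb{R}^m$ ($i\in[N],t\in[T]$) with, for all $i,t$, $\|\boldsymbol{v}_{it}\|_*\delta+\frac1N\sum_{j=1}^Nq_{jt}\le\epsilon\alpha_t$ and $\sup_{\boldsymbol{\xi}\in\Xi}[\boldsymbol{v}_{it}^{\top}\boldsymbol{\xi}-f_t(\boldsymbol{x},\boldsymbol{\xi})]+\alpha_t-\boldsymbol{v}_{it}^{\top}\boldsymbol{\zeta}^i-q_{it}\le0$. Then $\tilde Z_{C_2}$ equals the set of $\boldsymbol{x}\in\mathbb{R}^n$ for which there exist $\alpha_t>0$, $q_{it}\ge0$, $\boldsymbol{v}_{it}\in\mathbb{R}^m$, $u_{it}\in\mathbb{R}$,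 $\nu^{it}_k\ge0$ ($i\in[N],t\in[T],k\in[l]$) such that for all $i\in[N],t\in[T]$: $$\|\boldsymbol{v}_{it}\|_*\delta+\frac1N\sum_{j=1}^Nq_{jt}\le\epsilon\alpha_t,\qquad u_{it}-[(\boldsymbol{b}^t)^{\top}\boldsymbol{x}+h^t]+\alpha_t-\boldsymbol{v}_{it}^{\top}\boldsymbol{\zeta}^i\le q_{it},$$ $$\begin{bmatrix}\boldsymbol{A}^t&-\frac12(\boldsymbol{v}_{it}-\boldsymbol{x}-\sum_{k=1}^l\nu^{it}_k\boldsymbol{a}_k)\\-\frac12(\boldsymbol{v}_{it}-\boldsymbol{x}-\sum_{k=1}^l\nu^{it}_k\boldsymbol{a}_k)^{\top}&u_{it}-\sum_{k=1}^l\nu^{it}_kd_k\end{bmatrix}\succeq0.$$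
   Context: Setting: $\epsilon\in(0,1)$, $\delta>0$, $[T]=\{1,\dots,T\}$, $[l]=\{1,\dots,l\}$; $\boldsymbol{\zeta}^1,\dots,\boldsymbol{\zeta}^N\in\Xi$ given samples; $\|\cdot\|_*$ is the dual norm of a norm on $\mathbb{R}^m$; $\langle\boldsymbol{X},\boldsymbol{Y}\rangle=\mathrm{tr}(\boldsymbol{X}\boldsymbol{Y})$; $\succeq0$ denotes positive semidefiniteness. *)

theory Defs
  imports "HOL-Analysis.Analysis"
begin

definition is_norm :: "(real^'n \<Rightarrow> real) \<Rightarrow> bool" where
  "is_norm nrm \<longleftrightarrow> (\<forall>x. 0 \<le> nrm x) \<and> (\<forall>x. nrm x = 0 \<longleftrightarrow> x = 0)
     \<and> (\<forall>c x. nrm (c *\<^sub>R x) = \<bar>c\<bar> * nrm x) \<and> (\<forall>x y. nrm (x + y) \<le> nrm x + nrm y)"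

definition dual_norm :: "(real^'n \<Rightarrow> real) \<Rightarrow> real^'n \<Rightarrow> real" where
  "dual_norm nrm v = Sup {v \<bullet> \<xi> | \<xi>. nrm \<xi> \<le> 1}"

definition psd :: "real^'k^'k \<Rightarrow> bool" where
  "psd M \<longleftrightarrow> transpose M = M \<and> (\<forall>x. 0 \<le> x \<bullet> (M *v x))"

definition outer :: "real^'n \<Rightarrow> real^'n \<Rightarrow> real^'n^'n" where
  "outer x y = (\<chi> i j. x $ i * y $ j)"

definition mat_inner :: "real^'n^'n \<Rightarrow> real^'n^'n \<Rightarrow> real" where
  "mat_inner X Y = trace (X ** Y)"

text \<open>Block matrix [[M, w],[w^T, c]] of size (m+1)x(m+1), indexed by 'n option
  (None is the extra last index).\<close>
definition block_mat :: "real^'n^'n \<Rightarrow> real^'n \<Rightarrow> real \<Rightarrow> real^('n option)^('n option)" where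
  "block_mat M w c = (\<chi> i j. case (i, j) of
      (Some i', Some j') \<Rightarrow> M $ i' $ j'
    | (Some i', None) \<Rightarrow> w $ i'
    | (None, Some j') \<Rightarrow> w $ j'
    | (None, None) \<Rightarrow> c)"

end

theory Submission
  imports Defs
begin

text \<open>For fixed \<open>i\<close> and \<open>t\<close>, the semi-infinite constraint bounds the concave quadratic
  \<open>g \<xi> = (v - x) \<bullet> \<xi> - \<xi> \<bullet> (A *v \<xi>)\<close> by some \<open>m\<close> on the polyhedron \<open>\<Xi>\<close>. As every \<open>d k\<close>
  is positive, the origin is a Slater point of \<open>\<Xi>\<close>, and Lagrangian duality provides multipliers
  \<open>\<nu> \<ge> 0\<close> with \<open>g \<xi> + (\<Sum>k. \<nu> k * (d k - a k \<bullet> \<xi>)) \<le> m\<close> for all \<open>\<xi>\<close>. The multipliers are found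
  one constraint at a time; for a single halfspace, concavity along segments crossing the
  hyperplane bounds the slopes \<open>(g x - m) / (a \<bullet> x - c)\<close> over infeasible \<open>x\<close>, and their supremum
  is the multiplier. Finally, after homogenisation, an unconstrained upper bound on a quadratic is
  exactly positive semidefiniteness of the bordered matrix.\<close>

lemma mat_inner_outer_self: "mat_inner (A::real^'n^'n) (outer x x) = x \<bullet> (A *v x)"
  by (simp add: mat_inner_def outer_def trace_def matrix_matrix_mult_def inner_vec_def
      matrix_vector_mult_def sum_distrib_left mult.commute mult.left_commute)

lemma block_mat_quadratic_form:
  fixes M :: "real^'n^'n" and z :: "real^('n option)"
  shows "z \<bullet> (block_mat M w c *v z) =
     (\<chi> j. z $ Some j) \<bullet> (M *v (\<chi> j. z $ Some j)) + 2 * z $ None * (w \<bullet> (\<chi> j. z $ Some j))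
       + (z $ None)\<^sup>2 * c"
proof -
  have sum_option: "\<And>F :: 'n option \<Rightarrow> real. sum F UNIV = F None + (\<Sum>j\<in>UNIV. F (Some j))"
    by (simp add: UNIV_option_conv sum.reindex)
  show ?thesis
    by (simp add: inner_vec_def matrix_vector_mult_def block_mat_def sum_option sum.distrib
        sum_distrib_left sum_distrib_right power2_eq_square algebra_simps)
qed

lemma transpose_block_mat:
  assumes "transpose M = M"
  shows "transpose (block_mat M w c) = block_mat M w c"
  using assms unfolding transpose_def block_mat_def vec_eq_iff
  by (auto split: option.splits)

lemma psd_block_mat_iff:
  fixes M :: "real^'n^'n"
  assumes "psd M"
  shows "psd (block_mat M (- (1/2) *\<^sub>R w) c) \<longleftrightarrow> (\<forall>\<xi>. w \<bullet> \<xi> - \<xi> \<bullet> (M *v \<xi>) \<le> c)"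
proof
  assume psd_block: "psd (block_mat M (- (1/2) *\<^sub>R w) c)"
  show "\<forall>\<xi>. w \<bullet> \<xi> - \<xi> \<bullet> (M *v \<xi>) \<le> c"
  proof
    fix \<xi> :: "real^'n"
    define z :: "real^('n option)" where "z = (\<chi> i. case i of None \<Rightarrow> 1 | Some j \<Rightarrow> \<xi> $ j)"
    have "(\<chi> j. z $ Some j) = \<xi>" "z $ None = 1" by (simp_all add: z_def vec_eq_iff)
    moreover have "0 \<le> z \<bullet> (block_mat M (- (1/2) *\<^sub>R w) c *v z)" using psd_block by (simp add: psd_def)
    ultimately show "w \<bullet> \<xi> - \<xi> \<bullet> (M *v \<xi>) \<le> c" unfolding block_mat_quadratic_form by simp
  qed
next
  assume bound: "\<forall>\<xi>. w \<bullet> \<xi> - \<xi> \<bullet> (M *v \<xi>) \<le> c"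
  have sym: "transpose M = M" and nonneg: "\<And>y. 0 \<le> y \<bullet> (M *v y)" using assms by (auto simp: psd_def)
  show "psd (block_mat M (- (1/2) *\<^sub>R w) c)"
    unfolding psd_def
  proof (intro conjI allI transpose_block_mat[OF sym])
    fix z :: "real^('n option)"
    define y where "y = (\<chi> j. z $ Some j)"
    define s where "s = z $ None"
    have "0 \<le> y \<bullet> (M *v y) - s * (w \<bullet> y) + s\<^sup>2 * c"
    proof (cases "s = 0")
      case True
      then show ?thesis using nonneg by simp
    next
      case False
      \<comment> \<open>homogenisation: the form at \<open>(y, s)\<close> is \<open>s\<^sup>2\<close> times the slack of the bound at \<open>y / s\<close>\<close>
      define \<xi> where "\<xi> = (1 / s) *\<^sub>R y"
      have "y = s *\<^sub>R \<xi>" using False by (simp add: \<xi>_def)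
      then have "y \<bullet> (M *v y) - s * (w \<bullet> y) + s\<^sup>2 * c = s\<^sup>2 * (c - (w \<bullet> \<xi> - \<xi> \<bullet> (M *v \<xi>)))"
        by (simp add: power2_eq_square algebra_simps)
      also have "\<dots> \<ge> 0" using bound by simp
      finally show ?thesis .
    qed
    then show "0 \<le> z \<bullet> (block_mat M (- (1/2) *\<^sub>R w) c *v z)"
      unfolding block_mat_quadratic_form y_def[symmetric] s_def[symmetric] by simp
  qed
qed

lemma psd_block_mat_mono:
  assumes "psd M" "psd (block_mat M (- (1/2) *\<^sub>R w) c)" "c \<le> c'"
  shows "psd (block_mat M (- (1/2) *\<^sub>R w) c')"
  using assms(2,3) unfolding psd_block_mat_iff[OF assms(1)] by (meson order_trans)

lemma concave_on_linear_minus_psd_form: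
  assumes "psd M" "convex S"
  shows "concave_on S (\<lambda>\<xi>. w \<bullet> \<xi> - \<xi> \<bullet> (M *v \<xi>))"
  unfolding concave_on_iff
proof (intro conjI assms(2) ballI allI impI)
  fix x y and u v :: real
  assume "0 \<le> u" "0 \<le> v" "u + v = 1"
  then have v: "v = 1 - u" and "0 \<le> u * v * ((x - y) \<bullet> (M *v (x - y)))"
    using assms(1) by (auto simp: psd_def)
  moreover have "w \<bullet> (u *\<^sub>R x + v *\<^sub>R y) - (u *\<^sub>R x + v *\<^sub>R y) \<bullet> (M *v (u *\<^sub>R x + v *\<^sub>R y))
      = u * (w \<bullet> x - x \<bullet> (M *v x)) + v * (w \<bullet> y - y \<bullet> (M *v y))
        + u * v * ((x - y) \<bullet> (M *v (x - y)))"
    unfolding v by (simp add: algebra_simps)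
  ultimately show "u * (w \<bullet> x - x \<bullet> (M *v x)) + v * (w \<bullet> y - y \<bullet> (M *v y))
      \<le> w \<bullet> (u *\<^sub>R x + v *\<^sub>R y) - (u *\<^sub>R x + v *\<^sub>R y) \<bullet> (M *v (u *\<^sub>R x + v *\<^sub>R y))"
    by linarith
qed

lemma concave_on_affine_inner:
  fixes a :: "'a::real_inner"
  assumes "convex S"
  shows "concave_on S (\<lambda>x. r * (c - a \<bullet> x))"
  unfolding concave_on_iff
proof (intro conjI assms ballI allI impI)
  fix x y and u v :: real
  assume "0 \<le> u" "0 \<le> v" "u + v = 1"
  then have v: "v = 1 - u" by simp
  show "u * (r * (c - a \<bullet> x)) + v * (r * (c - a \<bullet> y)) \<le> r * (c - a \<bullet> (u *\<^sub>R x + v *\<^sub>R y))"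
    unfolding v by (simp add: algebra_simps)
qed

lemma convex_polyhedron: "convex {x. \<forall>k\<in>K. a k \<bullet> x \<le> d k}"
proof -
  have "{x. \<forall>k\<in>K. a k \<bullet> x \<le> d k} = (\<Inter>k\<in>K. {x. a k \<bullet> x \<le> d k})" by auto
  then show ?thesis by (simp add: convex_INT convex_halfspace_le)
qed

lemma concave_on_crossing_hyperplane:
  assumes g: "concave_on C g" and xy: "x \<in> C" "y \<in> C" "a \<bullet> y < c" "c < a \<bullet> x"
    and bound: "\<forall>z\<in>C. a \<bullet> z = c \<longrightarrow> g z \<le> M"
  shows "(c - a \<bullet> y) * (g x - M) \<le> (a \<bullet> x - c) * (M - g y)"
proof -
  define \<theta> where "\<theta> = (c - a \<bullet> y) / (a \<bullet> x - a \<bullet> y)"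
  have \<theta>: "0 \<le> \<theta>" "\<theta> \<le> 1" "\<theta> * (a \<bullet> x - a \<bullet> y) = c - a \<bullet> y"
    using xy by (auto simp: \<theta>_def field_simps)
  define z where "z = (1 - \<theta>) *\<^sub>R y + \<theta> *\<^sub>R x"
  have "z \<in> C"
    using concave_on_imp_convex[OF g] xy \<theta> unfolding z_def by (simp add: convex_alt)
  moreover have "a \<bullet> z = c"
    using \<theta>(3) by (simp add: z_def algebra_simps)
  ultimately have "g z \<le> M" using bound by blast
  moreover have "(1 - \<theta>) * g y + \<theta> * g x \<le> g z"
    unfolding z_def using concave_onD[OF g] \<theta> xy by blast
  ultimately have "((1 - \<theta>) * g y + \<theta> * g x) * (a \<bullet> x - a \<bullet> y) \<le> M * (a \<bullet> x - a \<bullet> y)"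
    using xy by (intro mult_right_mono) auto
  moreover have "((1 - \<theta>) * g y + \<theta> * g x) * (a \<bullet> x - a \<bullet> y)
      = g y * (a \<bullet> x - a \<bullet> y) + (g x - g y) * (\<theta> * (a \<bullet> x - a \<bullet> y))"
    by (simp add: algebra_simps)
  ultimately have "(a \<bullet> x - c) * g y + (c - a \<bullet> y) * g x \<le> M * (a \<bullet> x - a \<bullet> y)"
    unfolding \<theta>(3) by (simp add: algebra_simps)
  then show ?thesis by (simp add: algebra_simps)
qed

lemma lagrange_multiplier_halfspace:
  assumes g: "concave_on C g" and slater: "x0 \<in> C" "a \<bullet> x0 < c"
    and bound: "\<forall>x\<in>C. a \<bullet> x \<le> c \<longrightarrow> g x \<le> M"
  shows "\<exists>\<mu>\<ge>0. \<forall>x\<in>C. g x + \<mu> * (c - a \<bullet> x) \<le> M"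
proof -
  define S where "S = insert 0 {(g x - M) / (a \<bullet> x - c) | x. x \<in> C \<and> c < a \<bullet> x}"
  have S_le: "s \<le> (M - g y) / (c - a \<bullet> y)" if "s \<in> S" "y \<in> C" "a \<bullet> y < c" for s y
  proof -
    have "g y \<le> M" using bound that(2,3) by simp
    moreover have "(g x - M) / (a \<bullet> x - c) \<le> (M - g y) / (c - a \<bullet> y)"
      if "x \<in> C" "c < a \<bullet> x" for x
      using concave_on_crossing_hyperplane[OF g that(1) \<open>y \<in> C\<close> \<open>a \<bullet> y < c\<close> that(2)] bound
        \<open>a \<bullet> y < c\<close> that(2) by (simp add: divide_simps mult.commute)
    ultimately show ?thesis using \<open>s \<in> S\<close> \<open>a \<bullet> y < c\<close> by (auto simp: S_def)
  qed
  have bdd: "bdd_above S" using S_le slater by (auto simp: bdd_above_def)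
  define \<mu> where "\<mu> = Sup S"
  have "0 \<le> \<mu>" unfolding \<mu>_def by (rule cSup_upper[OF _ bdd]) (simp add: S_def)
  moreover have "g x + \<mu> * (c - a \<bullet> x) \<le> M" if "x \<in> C" for x
  proof (cases "a \<bullet> x" c rule: linorder_cases)
    case less
    have "\<mu> \<le> (M - g x) / (c - a \<bullet> x)"
      unfolding \<mu>_def by (rule cSup_least) (use S_le that less in \<open>auto simp: S_def\<close>)
    then show ?thesis using less by (simp add: field_simps)
  next
    case equal
    then show ?thesis using bound that by simp
  next
    case greater
    have "(g x - M) / (a \<bullet> x - c) \<le> \<mu>"
      unfolding \<mu>_def by (rule cSup_upper[OF _ bdd]) (use that greater in \<open>auto simp: S_def\<close>)
    then show ?thesis using greater by (simp add: field_simps)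
  qed
  ultimately show ?thesis by blast
qed

lemma lagrange_multipliers_polyhedron:
  assumes "finite K" and "concave_on C g" and slater: "x0 \<in> C" "\<forall>k\<in>K. a k \<bullet> x0 < d k"
    and "\<forall>x\<in>C. (\<forall>k\<in>K. a k \<bullet> x \<le> d k) \<longrightarrow> g x \<le> M"
  shows "\<exists>\<nu>. (\<forall>k\<in>K. 0 \<le> \<nu> k) \<and> (\<forall>x\<in>C. g x + (\<Sum>k\<in>K. \<nu> k * (d k - a k \<bullet> x)) \<le> M)"
  using assms
proof (induction K arbitrary: g rule: finite_induct)
  case empty
  then show ?case by simp
next
  case (insert j J)
  \<comment> \<open>dualise constraint \<open>j\<close> relative to the remaining polyhedron, then the rest by induction\<close>
  define D where "D = C \<inter> {x. \<forall>k\<in>J. a k \<bullet> x \<le> d k}"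
  have "convex D"
    unfolding D_def using concave_on_imp_convex[OF insert.prems(1)] convex_polyhedron
    by (rule convex_Int)
  then have "concave_on D g"
    using insert.prems(1) by (auto simp: D_def concave_on_def intro: convex_on_subset)
  moreover have "x0 \<in> D" using insert.prems(2,3) by (auto simp: D_def less_imp_le)
  ultimately obtain \<mu> where "\<mu> \<ge> 0" and \<mu>: "\<forall>x\<in>D. g x + \<mu> * (d j - a j \<bullet> x) \<le> M"
    using lagrange_multiplier_halfspace[of D g x0 "a j" "d j" M] insert.prems(3,4)
    by (auto simp: D_def)
  have "concave_on C (\<lambda>x. g x + \<mu> * (d j - a j \<bullet> x))"
    using insert.prems(1) concave_on_imp_convex[OF insert.prems(1)]
    by (intro concave_on_add concave_on_affine_inner)
  moreover have "\<forall>x\<in>C. (\<forall>k\<in>J. a k \<bullet> x \<le> d k) \<longrightarrow> g x + \<mu> * (d j - a j \<bullet> x) \<le> M"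
    using \<mu> by (simp add: D_def)
  ultimately obtain \<nu> where \<nu>: "\<forall>k\<in>J. 0 \<le> \<nu> k"
    "\<forall>x\<in>C. g x + \<mu> * (d j - a j \<bullet> x) + (\<Sum>k\<in>J. \<nu> k * (d k - a k \<bullet> x)) \<le> M"
    using insert.IH[of "\<lambda>x. g x + \<mu> * (d j - a j \<bullet> x)"] insert.prems(2,3) by auto
  have "(\<Sum>k\<in>insert j J. (\<nu>(j := \<mu>)) k * (d k - a k \<bullet> x))
      = \<mu> * (d j - a j \<bullet> x) + (\<Sum>k\<in>J. \<nu> k * (d k - a k \<bullet> x))" for x
    using insert.hyps by (auto intro: sum.cong)
  then show ?case
    using \<nu> \<open>\<mu> \<ge> 0\<close> by (intro exI[of _ "\<nu>(j := \<mu>)"]) (auto simp: add.assoc)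
qed

lemma SUP_ereal_add_le_zero_iff:
  "(SUP x\<in>S. ereal (f x)) + ereal c \<le> 0 \<longleftrightarrow> (\<forall>x\<in>S. f x \<le> - c)"
proof -
  have "(SUP x\<in>S. ereal (f x)) + ereal c \<le> 0 \<longleftrightarrow> (SUP x\<in>S. ereal (f x)) \<le> 0 - ereal c"
    by (rule ereal_le_minus[symmetric]) simp
  also have "\<dots> \<longleftrightarrow> (\<forall>x\<in>S. f x \<le> - c)" by (simp add: SUP_le_iff zero_ereal_def)
  finally show ?thesis .
qed

lemma polyhedral_bound_concave_quadratic_iff_psd:
  fixes M :: "real^'n^'n"
  assumes "psd M" "finite K" "\<forall>k\<in>K. 0 < d k"
  shows "(\<forall>\<xi>. (\<forall>k\<in>K. a k \<bullet> \<xi> \<le> d k) \<longrightarrow> w \<bullet> \<xi> - \<xi> \<bullet> (M *v \<xi>) \<le> c) \<longleftrightarrow>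
    (\<exists>\<nu>. (\<forall>k\<in>K. 0 \<le> \<nu> k) \<and>
      psd (block_mat M (- (1/2) *\<^sub>R (w - (\<Sum>k\<in>K. \<nu> k *\<^sub>R a k))) (c - (\<Sum>k\<in>K. \<nu> k * d k))))"
proof -
  have lagrangian: "w \<bullet> \<xi> - \<xi> \<bullet> (M *v \<xi>) + (\<Sum>k\<in>K. \<nu> k * (d k - a k \<bullet> \<xi>)) \<le> c \<longleftrightarrow>
      (w - (\<Sum>k\<in>K. \<nu> k *\<^sub>R a k)) \<bullet> \<xi> - \<xi> \<bullet> (M *v \<xi>) \<le> c - (\<Sum>k\<in>K. \<nu> k * d k)" for \<nu> \<xi>
  proof -
    have "(\<Sum>k\<in>K. \<nu> k * (d k - a k \<bullet> \<xi>)) = (\<Sum>k\<in>K. \<nu> k * d k) - (\<Sum>k\<in>K. \<nu> k *\<^sub>R a k) \<bullet> \<xi>"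
      by (simp add: inner_sum_left right_diff_distrib sum_subtractf)
    then show ?thesis by (simp add: inner_diff_left) linarith
  qed
  have block_iff: "psd (block_mat M (- (1/2) *\<^sub>R (w - (\<Sum>k\<in>K. \<nu> k *\<^sub>R a k))) (c - (\<Sum>k\<in>K. \<nu> k * d k)))
      \<longleftrightarrow> (\<forall>\<xi>. w \<bullet> \<xi> - \<xi> \<bullet> (M *v \<xi>) + (\<Sum>k\<in>K. \<nu> k * (d k - a k \<bullet> \<xi>)) \<le> c)" for \<nu>
    by (simp only: psd_block_mat_iff[OF assms(1)] lagrangian)
  show ?thesis
    unfolding block_iff
  proof
    assume "\<forall>\<xi>. (\<forall>k\<in>K. a k \<bullet> \<xi> \<le> d k) \<longrightarrow> w \<bullet> \<xi> - \<xi> \<bullet> (M *v \<xi>) \<le> c"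
    moreover have "concave_on UNIV (\<lambda>\<xi>. w \<bullet> \<xi> - \<xi> \<bullet> (M *v \<xi>))"
      using assms(1) by (rule concave_on_linear_minus_psd_form) simp
    ultimately show "\<exists>\<nu>. (\<forall>k\<in>K. 0 \<le> \<nu> k) \<and>
        (\<forall>\<xi>. w \<bullet> \<xi> - \<xi> \<bullet> (M *v \<xi>) + (\<Sum>k\<in>K. \<nu> k * (d k - a k \<bullet> \<xi>)) \<le> c)"
      using lagrange_multipliers_polyhedron[of K UNIV "\<lambda>\<xi>. w \<bullet> \<xi> - \<xi> \<bullet> (M *v \<xi>)" 0 a d c]
        assms(2,3) by auto
  next
    assume "\<exists>\<nu>. (\<forall>k\<in>K. 0 \<le> \<nu> k) \<and>
        (\<forall>\<xi>. w \<bullet> \<xi> - \<xi> \<bullet> (M *v \<xi>) + (\<Sum>k\<in>K. \<nu> k * (d k - a k \<bullet> \<xi>)) \<le> c)"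
    then obtain \<nu> where \<nu>: "\<forall>k\<in>K. 0 \<le> \<nu> k"
      "\<forall>\<xi>. w \<bullet> \<xi> - \<xi> \<bullet> (M *v \<xi>) + (\<Sum>k\<in>K. \<nu> k * (d k - a k \<bullet> \<xi>)) \<le> c"
      by blast
    show "\<forall>\<xi>. (\<forall>k\<in>K. a k \<bullet> \<xi> \<le> d k) \<longrightarrow> w \<bullet> \<xi> - \<xi> \<bullet> (M *v \<xi>) \<le> c"
    proof (intro allI impI)
      fix \<xi> assume "\<forall>k\<in>K. a k \<bullet> \<xi> \<le> d k"
      then have "0 \<le> (\<Sum>k\<in>K. \<nu> k * (d k - a k \<bullet> \<xi>))" using \<nu>(1) by (intro sum_nonneg) simp
      then show "w \<bullet> \<xi> - \<xi> \<bullet> (M *v \<xi>) \<le> c" using \<nu>(2)[rule_format, of \<xi>] by linarith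
    qed
  qed
qed

lemma bchoice2:
  assumes "\<And>i t. i \<in> I \<Longrightarrow> t \<in> J \<Longrightarrow> \<exists>u v. P i t u v"
  obtains U V where "\<And>i t. i \<in> I \<Longrightarrow> t \<in> J \<Longrightarrow> P i t (U i t) (V i t)"
  using assms by metis

lemma robust_quadratic_constraint_iff_lmi:
  fixes A :: "real^'n^'n"
  assumes "psd A" "finite K" "\<forall>k\<in>K. 0 < d k"
  shows "(SUP \<xi>\<in>{\<xi>. \<forall>k\<in>K. a k \<bullet> \<xi> \<le> d k}. ereal (v \<bullet> \<xi> - (\<xi> \<bullet> x + \<xi> \<bullet> (A *v \<xi>) + \<beta>)))
      + ereal \<gamma> \<le> 0 \<longleftrightarrow>
    (\<exists>u \<nu>. (\<forall>k\<in>K. 0 \<le> \<nu> k) \<and> u - \<beta> + \<gamma> \<le> 0 \<and>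
      psd (block_mat A (- (1/2) *\<^sub>R (v - x - (\<Sum>k\<in>K. \<nu> k *\<^sub>R a k))) (u - (\<Sum>k\<in>K. \<nu> k * d k))))"
proof -
  have "(SUP \<xi>\<in>{\<xi>. \<forall>k\<in>K. a k \<bullet> \<xi> \<le> d k}. ereal (v \<bullet> \<xi> - (\<xi> \<bullet> x + \<xi> \<bullet> (A *v \<xi>) + \<beta>)))
      + ereal \<gamma> \<le> 0 \<longleftrightarrow>
      (\<forall>\<xi>. (\<forall>k\<in>K. a k \<bullet> \<xi> \<le> d k) \<longrightarrow> (v - x) \<bullet> \<xi> - \<xi> \<bullet> (A *v \<xi>) \<le> \<beta> - \<gamma>)"
    unfolding SUP_ereal_add_le_zero_iff by (auto simp: inner_commute algebra_simps)
  also have "\<dots> \<longleftrightarrow> (\<exists>\<nu>. (\<forall>k\<in>K. 0 \<le> \<nu> k) \<and>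
      psd (block_mat A (- (1/2) *\<^sub>R (v - x - (\<Sum>k\<in>K. \<nu> k *\<^sub>R a k))) (\<beta> - \<gamma> - (\<Sum>k\<in>K. \<nu> k * d k))))"
    using assms by (rule polyhedral_bound_concave_quadratic_iff_psd)
  also have "\<dots> \<longleftrightarrow> (\<exists>u \<nu>. (\<forall>k\<in>K. 0 \<le> \<nu> k) \<and> u - \<beta> + \<gamma> \<le> 0 \<and>
      psd (block_mat A (- (1/2) *\<^sub>R (v - x - (\<Sum>k\<in>K. \<nu> k *\<^sub>R a k))) (u - (\<Sum>k\<in>K. \<nu> k * d k))))"
  proof
    assume "\<exists>\<nu>. (\<forall>k\<in>K. 0 \<le> \<nu> k) \<and>
      psd (block_mat A (- (1/2) *\<^sub>R (v - x - (\<Sum>k\<in>K. \<nu> k *\<^sub>R a k))) (\<beta> - \<gamma> - (\<Sum>k\<in>K. \<nu> k * d k)))"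
    then show "\<exists>u \<nu>. (\<forall>k\<in>K. 0 \<le> \<nu> k) \<and> u - \<beta> + \<gamma> \<le> 0 \<and>
      psd (block_mat A (- (1/2) *\<^sub>R (v - x - (\<Sum>k\<in>K. \<nu> k *\<^sub>R a k))) (u - (\<Sum>k\<in>K. \<nu> k * d k)))"
      by (intro exI[of _ "\<beta> - \<gamma>"]) simp
  next
    assume "\<exists>u \<nu>. (\<forall>k\<in>K. 0 \<le> \<nu> k) \<and> u - \<beta> + \<gamma> \<le> 0 \<and>
      psd (block_mat A (- (1/2) *\<^sub>R (v - x - (\<Sum>k\<in>K. \<nu> k *\<^sub>R a k))) (u - (\<Sum>k\<in>K. \<nu> k * d k)))"
    then obtain u \<nu> where "\<forall>k\<in>K. 0 \<le> \<nu> k" "u - \<beta> + \<gamma> \<le> 0"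
      "psd (block_mat A (- (1/2) *\<^sub>R (v - x - (\<Sum>k\<in>K. \<nu> k *\<^sub>R a k))) (u - (\<Sum>k\<in>K. \<nu> k * d k)))"
      by blast
    moreover have "u - (\<Sum>k\<in>K. \<nu> k * d k) \<le> \<beta> - \<gamma> - (\<Sum>k\<in>K. \<nu> k * d k)"
      using \<open>u - \<beta> + \<gamma> \<le> 0\<close> by simp
    ultimately show "\<exists>\<nu>. (\<forall>k\<in>K. 0 \<le> \<nu> k) \<and>
      psd (block_mat A (- (1/2) *\<^sub>R (v - x - (\<Sum>k\<in>K. \<nu> k *\<^sub>R a k))) (\<beta> - \<gamma> - (\<Sum>k\<in>K. \<nu> k * d k)))"
      using psd_block_mat_mono[OF assms(1)] by blast
  qed
  finally show ?thesis .
qed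

theorem proposition2:
  fixes nrm :: "real^'n \<Rightarrow> real"
    and \<epsilon> \<delta> :: real and N T l :: nat
    and \<zeta> :: "nat \<Rightarrow> real^'n"
    and a :: "nat \<Rightarrow> real^'n" and d :: "nat \<Rightarrow> real"
    and A :: "nat \<Rightarrow> real^'n^'n" and b :: "nat \<Rightarrow> real^'n" and h :: "nat \<Rightarrow> real"
    and \<Xi> :: "(real^'n) set" and f :: "nat \<Rightarrow> real^'n \<Rightarrow> real^'n \<Rightarrow> real"
  assumes "is_norm nrm"
    and "0 < \<epsilon>" "\<epsilon> < 1" "0 < \<delta>" "0 < N"
    and "\<forall>i\<in>{1..N}. \<zeta> i \<in> \<Xi>"
    and "\<Xi> = {\<xi>. \<forall>k\<in>{1..l}. a k \<bullet> \<xi> \<le> d k}"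
    and "\<forall>k\<in>{1..l}. 0 < d k"
    and "\<forall>t\<in>{1..T}. psd (A t)"
    and "\<And>t x \<xi>. f t x \<xi> = \<xi> \<bullet> x + mat_inner (A t) (outer \<xi> \<xi>) + b t \<bullet> x + h t"
  shows
   "{x. \<exists>(\<alpha>::nat \<Rightarrow> real) (q::nat \<Rightarrow> nat \<Rightarrow> real) (v::nat \<Rightarrow> nat \<Rightarrow> real^'n).
        (\<forall>t\<in>{1..T}. 0 < \<alpha> t) \<and>
        (\<forall>i\<in>{1..N}. \<forall>t\<in>{1..T}. 0 \<le> q i t) \<and>
        (\<forall>i\<in>{1..N}. \<forall>t\<in>{1..T}.
            dual_norm nrm (v i t) * \<delta> + (1 / real N) * (\<Sum>j=1..N. q j t) \<le> \<epsilon> * \<alpha> t \<and>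
            (SUP \<xi>\<in>\<Xi>. ereal (v i t \<bullet> \<xi> - f t x \<xi>))
               + ereal (\<alpha> t - v i t \<bullet> \<zeta> i - q i t) \<le> 0)}
    = {x. \<exists>(\<alpha>::nat \<Rightarrow> real) (q::nat \<Rightarrow> nat \<Rightarrow> real) (v::nat \<Rightarrow> nat \<Rightarrow> real^'n)
          (u::nat \<Rightarrow> nat \<Rightarrow> real) (\<nu>::nat \<Rightarrow> nat \<Rightarrow> nat \<Rightarrow> real).
        (\<forall>t\<in>{1..T}. 0 < \<alpha> t) \<and>
        (\<forall>i\<in>{1..N}. \<forall>t\<in>{1..T}. 0 \<le> q i t) \<and>
        (\<forall>i\<in>{1..N}. \<forall>t\<in>{1..T}. \<forall>k\<in>{1..l}. 0 \<le> \<nu> i t k) \<and>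
        (\<forall>i\<in>{1..N}. \<forall>t\<in>{1..T}.
            dual_norm nrm (v i t) * \<delta> + (1 / real N) * (\<Sum>j=1..N. q j t) \<le> \<epsilon> * \<alpha> t \<and>
            u i t - (b t \<bullet> x + h t) + \<alpha> t - v i t \<bullet> \<zeta> i \<le> q i t \<and>
            psd (block_mat (A t)
                   (- (1/2) *\<^sub>R (v i t - x - (\<Sum>k=1..l. \<nu> i t k *\<^sub>R a k)))
                   (u i t - (\<Sum>k=1..l. \<nu> i t k * d k))))}"
  (is "?L = ?R")
proof -
  \<comment> \<open>both sides share the dual-norm constraint\<close>
  have f_eq: "f t x \<xi> = \<xi> \<bullet> x + \<xi> \<bullet> (A t *v \<xi>) + (b t \<bullet> x + h t)" for t x \<xi>
    by (simp add: assms(10) mat_inner_outer_self add.assoc)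
  have per_constraint:
    "(SUP \<xi>\<in>\<Xi>. ereal (v \<bullet> \<xi> - f t x \<xi>)) + ereal (\<alpha> - v \<bullet> \<zeta> i - q) \<le> 0 \<longleftrightarrow>
      (\<exists>u \<nu>. (\<forall>k\<in>{1..l}. 0 \<le> \<nu> k) \<and> u - (b t \<bullet> x + h t) + \<alpha> - v \<bullet> \<zeta> i \<le> q \<and>
        psd (block_mat (A t) (- (1/2) *\<^sub>R (v - x - (\<Sum>k=1..l. \<nu> k *\<^sub>R a k)))
          (u - (\<Sum>k=1..l. \<nu> k * d k))))"
    if "t \<in> {1..T}" for t x v \<alpha> q i
    using robust_quadratic_constraint_iff_lmi[where A = "A t" and K = "{1..l}" and \<beta> = "b t \<bullet> x + h t"
        and \<gamma> = "\<alpha> - v \<bullet> \<zeta> i - q"] assms(7-9) that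
    unfolding f_eq by (simp add: algebra_simps)
  show ?thesis
  proof (intro set_eqI iffI)
    fix x assume "x \<in> ?L"
    then obtain \<alpha> q v where "\<forall>t\<in>{1..T}. 0 < \<alpha> t" "\<forall>i\<in>{1..N}. \<forall>t\<in>{1..T}. 0 \<le> q i t"
      and cons: "\<forall>i\<in>{1..N}. \<forall>t\<in>{1..T}.
            dual_norm nrm (v i t) * \<delta> + (1 / real N) * (\<Sum>j=1..N. q j t) \<le> \<epsilon> * \<alpha> t \<and>
            (SUP \<xi>\<in>\<Xi>. ereal (v i t \<bullet> \<xi> - f t x \<xi>)) + ereal (\<alpha> t - v i t \<bullet> \<zeta> i - q i t) \<le> 0"
      by blast
    moreover have "\<exists>u \<nu>. (\<forall>k\<in>{1..l}. 0 \<le> \<nu> k) \<and> u - (b t \<bullet> x + h t) + \<alpha> t - v i t \<bullet> \<zeta> i \<le> q i t \<and>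
        psd (block_mat (A t) (- (1/2) *\<^sub>R (v i t - x - (\<Sum>k=1..l. \<nu> k *\<^sub>R a k)))
          (u - (\<Sum>k=1..l. \<nu> k * d k)))"
      if "i \<in> {1..N}" "t \<in> {1..T}" for i t
      unfolding per_constraint[OF that(2), symmetric] using cons that by blast
    then obtain u \<nu> where "\<And>i t. i \<in> {1..N} \<Longrightarrow> t \<in> {1..T} \<Longrightarrow>
        (\<forall>k\<in>{1..l}. 0 \<le> \<nu> i t k) \<and> u i t - (b t \<bullet> x + h t) + \<alpha> t - v i t \<bullet> \<zeta> i \<le> q i t \<and>
        psd (block_mat (A t) (- (1/2) *\<^sub>R (v i t - x - (\<Sum>k=1..l. \<nu> i t k *\<^sub>R a k)))
          (u i t - (\<Sum>k=1..l. \<nu> i t k * d k)))"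
      by (elim bchoice2) (rule that)
    ultimately show "x \<in> ?R"
      unfolding mem_Collect_eq
      by (intro exI[of _ \<alpha>] exI[of _ q] exI[of _ v] exI[of _ u] exI[of _ \<nu>]) simp
  next
    fix x assume "x \<in> ?R"
    then obtain \<alpha> q v u \<nu> where "\<forall>t\<in>{1..T}. 0 < \<alpha> t" "\<forall>i\<in>{1..N}. \<forall>t\<in>{1..T}. 0 \<le> q i t"
      and lmi: "\<forall>i\<in>{1..N}. \<forall>t\<in>{1..T}. (\<forall>k\<in>{1..l}. 0 \<le> \<nu> i t k) \<and>
        dual_norm nrm (v i t) * \<delta> + (1 / real N) * (\<Sum>j=1..N. q j t) \<le> \<epsilon> * \<alpha> t \<and>
        u i t - (b t \<bullet> x + h t) + \<alpha> t - v i t \<bullet> \<zeta> i \<le> q i t \<and>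
        psd (block_mat (A t) (- (1/2) *\<^sub>R (v i t - x - (\<Sum>k=1..l. \<nu> i t k *\<^sub>R a k)))
          (u i t - (\<Sum>k=1..l. \<nu> i t k * d k)))"
      by blast
    moreover have "(SUP \<xi>\<in>\<Xi>. ereal (v i t \<bullet> \<xi> - f t x \<xi>)) + ereal (\<alpha> t - v i t \<bullet> \<zeta> i - q i t) \<le> 0"
      if "i \<in> {1..N}" "t \<in> {1..T}" for i t
      unfolding per_constraint[OF that(2)] using lmi that by blast
    ultimately show "x \<in> ?L"
      unfolding mem_Collect_eq by (intro exI[of _ \<alpha>] exI[of _ q] exI[of _ v]) simp
  qed
qed

end
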